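(* Let $q\geqslant 3$ be a power of the prime $p$, let $r\in\mathbb{Z}_{\geqslant 1}$ and $\alpha\in\mathbb{F}_{q^r}$. If $\mathrm{Tr}_{\mathbb{F}_{q^r}/\mathbb{F}_q}(\alpha)\neq 0$, then, with $\beta=(\mathrm{Tr}_{\mathbb{F}_{q^r}/\mathbb{F}_q}(\alpha))^{p-1}$, there exist distinct $\gamma_1,\ldots,\gamma_{q/p}\in\mathbb{F}_{q^r}^{\times}$ such that $$T^q-T-\alpha=(T^p-\beta T-\gamma_1)(T^p-\beta T-\gamma_2)\cdots(T^p-\beta T-\gamma_{q/p})$$ in $\mathbb{F}_{q^r}[T]$. If $\mathrm{Tr}_{\mathbb{F}_{q^r}/\mathbb{F}_q}(\alpha)=0$, then $T^q-T-\alpha$ splits completely into linear factors in $\mathbb{F}_{q^r}[T]$.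
   Context: $\mathrm{Tr}_{\mathbb{F}_{q^r}/\mathbb{F}_q}$ denotes the field trace, $T$ an indeterminate. *)

theory Defs
  imports "HOL-Computational_Algebra.Polynomial"
begin

text \<open>Field trace Tr_{F_{q^r}/F_q}: for a finite field of order q^r, the trace of
  alpha down to the subfield F_q = {x. x^q = x} is the sum of its Galois conjugates
  alpha^(q^i), i = 0..r-1.\<close>
definition fin_trace :: "nat \<Rightarrow> nat \<Rightarrow> 'a::field \<Rightarrow> 'a" where
  "fin_trace q r \<alpha> = (\<Sum>i<r. \<alpha> ^ (q ^ i))"

end

theory Submission
  imports Defs "HOL-Computational_Algebra.Primes"
begin

(*
  Let t = Tr(\<alpha>), so t ^ q = t. Put L = T ^ p - t ^ (p - 1) T, which is t ^ p (S ^ p - S) for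
  S = T / t, and M = t Tr_{F_q/F_p}(T / t ^ p), with Tr_{F_q/F_p}(w) = w + w ^ p + ... + w ^ (q / p).
  Both composites telescope: M(L) = T ^ q - T as polynomials, and L(M(y)) = y ^ q - y on F_{q^r}.
  Hence T ^ q - T - \<alpha> is the product of the L - c over the roots c of M - \<alpha>, provided there
  are q / p of them in F_{q^r}. The additive map M has at most q / p zeros, and by the second
  identity its image consists of elements whose trace is a root of L, a set of at most
  p q ^ (r - 1) elements. As these bounds multiply to q ^ r, both are attained, so \<alpha>, whose
  trace t is a root of L, has exactly q / p preimages under M, all nonzero. If Tr(\<alpha>) = 0, the
  same count for the additive map x \<mapsto> x ^ q - x, whose image lies in the kernel of the trace,
  gives q roots of T ^ q - T - \<alpha>.
*)

(* The library's finite_field_power_card_eq_same needs the sort finite_field,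
   which {field, finite} does not provide. *)
lemma field_power_card_eq_self:
  fixes x :: "'a::{field,finite}"
  shows "x ^ card (UNIV :: 'a set) = x"
proof (cases "x = 0")
  case False
  let ?U = "UNIV - {0::'a}"
  have "(\<Prod>y\<in>?U. x * y) = (\<Prod>y\<in>?U. y)"
    by (rule prod.reindex_bij_witness[of _ "\<lambda>y. y / x" "\<lambda>y. x * y"]) (use False in auto)
  moreover have "(\<Prod>y\<in>?U. x * y) = x ^ card ?U * \<Prod>?U"
    by (simp add: prod.distrib)
  moreover have "\<Prod>?U \<noteq> 0"
    by (subst prod_zero_iff) auto
  ultimately have "x ^ card ?U = 1"
    by (metis mult_cancel_right2)
  moreover have "card (UNIV :: 'a set) = Suc (card ?U)"
    using card_Suc_Diff1[of UNIV "0::'a"] by simp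
  ultimately show ?thesis
    by (simp only: power_Suc mult_1_right)
qed (simp add: finite_UNIV_card_ge_0)

lemma of_nat_card_UNIV_eq_0: "of_nat (card (UNIV :: 'a::{ring_1,finite} set)) = (0 :: 'a)"
proof -
  have "(\<Sum>x\<in>UNIV. x + 1) = (\<Sum>x\<in>UNIV. x :: 'a)"
    by (rule sum.reindex_bij_witness[of _ "\<lambda>x. x - 1" "\<lambda>x. x + 1"]) auto
  then show ?thesis
    by (simp add: sum.distrib)
qed

lemma prime_CHAR_finite_field: "prime CHAR('a::{field,finite})"
  by (simp add: finite_imp_CHAR_pos prime_CHAR_semidom)

lemma CHAR_eq_if_card_eq_prime_power:
  assumes "prime p" and "card (UNIV :: 'a::{field,finite} set) = p ^ n" and "n > 0"
  shows "CHAR('a) = p"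
proof -
  have "CHAR('a) dvd p ^ n"
    using of_nat_card_UNIV_eq_0[where 'a = 'a] assms(2) of_nat_eq_0_iff_char_dvd by metis
  then show ?thesis
    using assms(1) prime_CHAR_finite_field prime_dvd_power primes_dvd_imp_eq by blast
qed

lemma freshmans_dream_diff:
  fixes x y :: "'a::comm_ring_1"
  assumes "prime CHAR('a)" and "m = CHAR('a) ^ n"
  shows "(x - y) ^ m = x ^ m - y ^ m"
  using freshmans_dream'[OF assms, where x = "x - y" and y = y] by simp

lemma fin_trace_add:
  fixes x y :: "'a::field"
  assumes "prime CHAR('a)" and "q = CHAR('a) ^ n"
  shows "fin_trace q r (x + y) = fin_trace q r x + fin_trace q r y"
proof -
  have "(x + y) ^ (q ^ i) = x ^ (q ^ i) + y ^ (q ^ i)" for i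
    by (rule freshmans_dream'[OF assms(1), where n = "n * i"]) (simp add: assms(2) power_mult)
  then show ?thesis
    by (simp add: fin_trace_def sum.distrib)
qed

lemma fin_trace_diff:
  fixes x y :: "'a::field"
  assumes "prime CHAR('a)" and "q = CHAR('a) ^ n"
  shows "fin_trace q r (x - y) = fin_trace q r x - fin_trace q r y"
  using fin_trace_add[OF assms, where x = "x - y" and y = y] by simp

lemma fin_trace_power:
  fixes x :: "'a::field"
  assumes "prime CHAR('a)" and "m = CHAR('a) ^ n"
  shows "fin_trace q r (x ^ m) = fin_trace q r x ^ m"
  by (simp add: fin_trace_def freshmans_dream_sum'[OF assms] flip: power_mult)
     (simp add: mult.commute)

lemma sum_frobenius_telescope:
  fixes x :: "'a::comm_ring_1"
  assumes "prime CHAR('a)" and "q = CHAR('a) ^ n"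
  shows "(\<Sum>i<r. (x ^ q - x) ^ (q ^ i)) = x ^ (q ^ r) - x"
proof -
  have "(x ^ q - x) ^ (q ^ i) = x ^ (q ^ Suc i) - x ^ (q ^ i)" for i
    by (subst freshmans_dream_diff[OF assms(1), where n = "n * i"])
       (simp_all add: assms(2) power_mult flip: power_Suc2)
  then have "(\<Sum>i<r. (x ^ q - x) ^ (q ^ i)) = (\<Sum>i<r. x ^ (q ^ Suc i) - x ^ (q ^ i))"
    by (simp only:)
  also have "\<dots> = x ^ (q ^ r) - x"
    using sum_lessThan_telescope[where f = "\<lambda>i. x ^ (q ^ i)"] by simp
  finally show ?thesis .
qed

lemma fin_trace_frobenius_diff:
  fixes x :: "'a::field"
  assumes "prime CHAR('a)" and "q = CHAR('a) ^ n"
  shows "fin_trace q r (x ^ q - x) = x ^ (q ^ r) - x"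
  unfolding fin_trace_def by (rule sum_frobenius_telescope[OF assms])

lemma fin_trace_power_minus_self:
  fixes x :: "'a::field"
  assumes "prime CHAR('a)" and "q = CHAR('a) ^ n"
  shows "fin_trace q r x ^ q - fin_trace q r x = x ^ (q ^ r) - x"
  using fin_trace_frobenius_diff[OF assms]
  by (simp add: fin_trace_diff[OF assms] fin_trace_power[OF assms])

lemma fin_trace_commute:
  fixes g :: "'a::field \<Rightarrow> 'a"
  assumes add: "\<And>x y. g (x + y) = g x + g y" and frob: "\<And>x. g (x ^ q) = g x ^ q"
  shows "fin_trace q r (g x) = g (fin_trace q r x)"
proof -
  have "g 0 = 0"
    by (metis add.right_neutral add[of 0 0] add_left_cancel)
  have "g (x ^ (q ^ i)) = g x ^ (q ^ i)" for i
  proof (induction i)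
    case (Suc i)
    have "g (x ^ (q ^ Suc i)) = g ((x ^ (q ^ i)) ^ q)"
      by (simp only: power_Suc2 power_mult)
    also have "\<dots> = g x ^ (q ^ Suc i)"
      by (simp only: frob Suc.IH power_Suc2 power_mult)
    finally show ?case .
  qed simp
  then show ?thesis
    unfolding fin_trace_def sum_comp_morphism[of g, OF \<open>g 0 = 0\<close> add, symmetric] comp_def
    by simp
qed

definition trace_poly :: "nat \<Rightarrow> nat \<Rightarrow> 'a::comm_semiring_1 poly" where
  "trace_poly q r = (\<Sum>i<r. monom 1 (q ^ i))"

lemma poly_trace_poly: "poly (trace_poly q r) x = fin_trace q r x"
  by (simp add: trace_poly_def fin_trace_def poly_sum poly_monom)

lemma pcompose_monom: "pcompose (monom c n) p = smult c (p ^ n)"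
  by (induction n)
     (simp_all add: monom_altdef pcompose_smult pcompose_mult pcompose_pCons pcompose_1)

lemma pcompose_trace_poly: "pcompose (trace_poly q r) p = (\<Sum>i<r. p ^ (q ^ i))"
  by (simp add: trace_poly_def pcompose_sum pcompose_monom)

lemma
  assumes "q \<ge> 2" and "r > 0"
  shows degree_trace_poly: "degree (trace_poly q r :: 'a::comm_semiring_1 poly) = q ^ (r - 1)"
    and lead_coeff_trace_poly: "lead_coeff (trace_poly q r :: 'a poly) = 1"
proof -
  obtain m where r: "r = Suc m"
    using assms(2) gr0_implies_Suc by blast
  have "degree (trace_poly q m :: 'a poly) \<le> q ^ m - 1"
    unfolding trace_poly_def using assms(1)
    by (intro degree_sum_le)
       (auto intro!: order.trans[OF degree_monom_le] Nat.le_diff_conv2[THEN iffD2]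
         simp: Suc_le_eq power_strict_increasing)
  then have less: "degree (trace_poly q m :: 'a poly) < degree (monom (1::'a) (q ^ m))"
    using assms(1) by (simp add: degree_monom_eq le_less_trans[OF _ diff_less])
  have split: "trace_poly q r = trace_poly q m + monom (1::'a) (q ^ m)"
    by (simp add: trace_poly_def r)
  show "degree (trace_poly q r :: 'a poly) = q ^ (r - 1)"
    using less unfolding split by (simp add: degree_add_eq_right degree_monom_eq r)
  show "lead_coeff (trace_poly q r :: 'a poly) = 1"
    using lead_coeff_add_le[OF less] unfolding split by (simp only: lead_coeff_monom)
qed

lemma card_fin_trace_zero_le:
  assumes "q \<ge> 2" and "r > 0"
  shows "card {x :: 'a::field. fin_trace q r x = 0} \<le> q ^ (r - 1)"
proof -
  have "trace_poly q r \<noteq> (0 :: 'a poly)"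
    using lead_coeff_trace_poly[OF assms, where 'a = 'a] by auto
  then show ?thesis
    using card_poly_roots_bound[of "trace_poly q r :: 'a poly"]
    by (simp add: poly_trace_poly degree_trace_poly[OF assms])
qed

lemma card_fiber_additive:
  fixes f :: "'a::ab_group_add \<Rightarrow> 'b::ab_group_add"
  assumes add: "\<And>x y. f (x + y) = f x + f y" and "y \<in> range f"
  shows "card {x. f x = y} = card {x. f x = 0}"
proof -
  obtain x0 where y: "y = f x0"
    using assms(2) by blast
  have diff: "f (x - x0) = f x - y" for x
    using add[of "x - x0" x0] y by (simp add: algebra_simps)
  have "{x. f x = y} = (\<lambda>z. z + x0) ` {x. f x = 0}"
  proof (intro set_eqI iffI)
    fix x
    assume "x \<in> {x. f x = y}"
    then show "x \<in> (\<lambda>z. z + x0) ` {x. f x = 0}"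
      using diff[of x] by (intro image_eqI[of _ _ "x - x0"]) auto
  qed (auto simp: add y)
  then show ?thesis
    by (simp add: card_image)
qed

lemma card_preimage_eq_sum_fibers:
  fixes f :: "'a::finite \<Rightarrow> 'b"
  assumes "finite B"
  shows "card {x. f x \<in> B} = (\<Sum>y\<in>B. card {x. f x = y})"
proof -
  have "{x. f x \<in> B} = (\<Union>y\<in>B. {x. f x = y})"
    by auto
  also have "card \<dots> = (\<Sum>y\<in>B. card {x. f x = y})"
    by (rule card_UN_disjoint) (use assms in auto)
  finally show ?thesis .
qed

lemma card_preimage_additive_le:
  fixes f :: "'a::{ab_group_add,finite} \<Rightarrow> 'b::ab_group_add"
  assumes add: "\<And>x y. f (x + y) = f x + f y" and "finite B"
  shows "card {x. f x \<in> B} \<le> card B * card {x. f x = 0}"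
proof -
  have "card {x. f x = y} \<le> card {x. f x = 0}" for y
  proof (cases "y \<in> range f")
    case False
    then have "{x. f x = y} = {}"
      by auto
    then show ?thesis
      by simp
  qed (simp add: card_fiber_additive[where f = f, OF add])
  then have "(\<Sum>y\<in>B. card {x. f x = y}) \<le> card B * card {x. f x = 0}"
    using sum_bounded_above[of B "\<lambda>y. card {x. f x = y}"] by simp
  then show ?thesis
    by (simp add: card_preimage_eq_sum_fibers[OF assms(2)])
qed

lemma card_fiber_additive_eq:
  fixes f :: "'a::{ab_group_add,finite} \<Rightarrow> 'b::ab_group_add"
  assumes add: "\<And>x y. f (x + y) = f x + f y"
    and "range f \<subseteq> B" "finite B" "card B \<le> m" "card {x. f x = 0} \<le> n"
    and "card (UNIV :: 'a set) = m * n" and "y \<in> B"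
  shows "card {x. f x = y} = n"
proof -
  let ?K = "card {x. f x = 0}"
  have "card (UNIV :: 'a set) = card {x. f x \<in> range f}"
    by simp
  also have "\<dots> = (\<Sum>y\<in>range f. card {x. f x = y})"
    by (rule card_preimage_eq_sum_fibers) simp
  also have "\<dots> = card (range f) * ?K"
    by (simp add: card_fiber_additive[where f = f, OF add])
  finally have order: "card (range f) * ?K = m * n"
    using assms(6) by simp
  have range_le: "card (range f) \<le> m"
    using card_mono[OF assms(3,2)] assms(4) by simp
  have "m > 0" "n > 0"
    using order finite_UNIV_card_ge_0[where 'a = 'a] assms(6) by auto
  have "card (range f) * ?K \<le> card (range f) * n" "card (range f) * n \<le> m * n"
    using assms(5) range_le by simp_all
  then have "card (range f) = m" "?K = n"
    using order \<open>m > 0\<close> \<open>n > 0\<close> by auto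
  then have "range f = B"
    using card_subset_eq[OF assms(3,2)] assms(4) card_mono[OF assms(3,2)] by simp
  then show ?thesis
    using card_fiber_additive[where f = f, OF add, of y] assms(7) \<open>?K = n\<close> by simp
qed

lemma pcompose_diff_const_eq_prod:
  fixes P Q :: "'a::field poly"
  assumes "n > 0" "coeff P n = 1" "degree P \<le> n"
    and "finite S" "card S = n" "\<And>c. c \<in> S \<Longrightarrow> poly P c = a"
  shows "pcompose (P - [:a:]) Q = (\<Prod>c\<in>S. Q - [:c:])"
proof -
  have degree_prod: "degree (\<Prod>c\<in>S. [:- c, 1:]) = n"
    using assms(4,5) by (simp add: degree_prod_eq_sum_degree)
  have "P - [:a:] = (\<Prod>c\<in>S. [:- c, 1:])"
  proof (rule poly_eqI_degree_lead_coeff[where n = n and A = S])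
    have "coeff [:a:] n = 0"
      using assms(1) by (cases n) simp_all
    moreover have "lead_coeff (\<Prod>c\<in>S. [:- c, 1:]) = 1"
      by (simp add: lead_coeff_prod)
    ultimately show "coeff (P - [:a:]) n = coeff (\<Prod>c\<in>S. [:- c, 1:]) n"
      using assms(2) degree_prod by simp
    show "degree (P - [:a:]) \<le> n"
      using assms(3) by (simp add: degree_diff_le)
    show "poly (P - [:a:]) z = poly (\<Prod>c\<in>S. [:- c, 1:]) z" if "z \<in> S" for z
      using that assms(4,6) by (simp add: poly_prod)
  qed (use assms(5) degree_prod in auto)
  moreover have "pcompose [:- c, 1:] Q = Q - [:c:]" for c
    by (simp add: pcompose_pCons algebra_simps flip: minus_pCons)
  ultimately show ?thesis
    by (simp only: pcompose_prod)
qed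

definition scaled_artin_schreier_poly :: "nat \<Rightarrow> 'a::field \<Rightarrow> 'a poly" where
  "scaled_artin_schreier_poly p t = monom 1 p - smult (t ^ (p - 1)) [:0, 1:]"

definition scaled_trace_poly :: "nat \<Rightarrow> nat \<Rightarrow> 'a::field \<Rightarrow> 'a poly" where
  "scaled_trace_poly p k t = smult t (pcompose (trace_poly p k) [:0, inverse (t ^ p):])"

lemma poly_scaled_trace_poly:
  "poly (scaled_trace_poly p k t) y = t * fin_trace p k (y * inverse (t ^ p))"
  by (simp add: scaled_trace_poly_def poly_pcompose poly_trace_poly mult.commute)

lemma
  fixes t :: "'a::field"
  assumes "p \<ge> 2" and "k > 0" and "t ^ (p ^ k) = t" and "t \<noteq> 0"
  shows degree_scaled_trace_poly: "degree (scaled_trace_poly p k t) = p ^ (k - 1)"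
    and lead_coeff_scaled_trace_poly: "lead_coeff (scaled_trace_poly p k t) = 1"
proof -
  have "p ^ k = p * p ^ (k - 1)"
    using assms(2) by (simp flip: power_Suc)
  then have "inverse (t ^ p) ^ p ^ (k - 1) = inverse t"
    using assms(3) by (metis power_inverse power_mult)
  moreover have "lead_coeff (trace_poly p k :: 'a poly) = 1"
    using assms(1,2) by (rule lead_coeff_trace_poly)
  ultimately show "lead_coeff (scaled_trace_poly p k t) = 1"
    using assms by (simp add: scaled_trace_poly_def lead_coeff_smult lead_coeff_comp
        degree_trace_poly)
  show "degree (scaled_trace_poly p k t) = p ^ (k - 1)"
    using assms by (simp add: scaled_trace_poly_def degree_pcompose degree_trace_poly)
qed

lemma pcompose_scaled_trace_artin_schreier:
  fixes t :: "'a::field"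
  assumes "CHAR('a) = p" and "prime p" and "t ^ (p ^ k) = t" and "t \<noteq> 0"
  shows "pcompose (scaled_trace_poly p k t) (scaled_artin_schreier_poly p t)
           = monom 1 (p ^ k) - [:0, 1:]"
proof -
  let ?Y = "monom (inverse t) 1"
  have "p > 0"
    using assms(2) prime_gt_0_nat by blast
  have "t ^ (p - 1) * inverse (t ^ p) = inverse t"
    using \<open>p > 0\<close> assms(4) by (cases p) (simp_all add: field_simps)
  moreover have "?Y ^ p = monom (inverse (t ^ p)) p"
    by (simp add: monom_power power_inverse)
  ultimately have scale: "smult (inverse (t ^ p)) (scaled_artin_schreier_poly p t) = ?Y ^ p - ?Y"
    by (simp add: scaled_artin_schreier_poly_def smult_monom smult_diff_right mult.commute
        monom_Suc monom_0)
  have frob: "?Y ^ (p ^ k) = smult (inverse t) (monom 1 (p ^ k))"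
    using assms(3) by (simp add: monom_power smult_monom) (metis power_inverse)
  have inner: "pcompose [:0, inverse (t ^ p):] (scaled_artin_schreier_poly p t) = ?Y ^ p - ?Y"
    unfolding scale[symmetric] by (simp add: pcompose_pCons)
  have "pcompose (scaled_trace_poly p k t) (scaled_artin_schreier_poly p t)
      = smult t (pcompose (trace_poly p k)
                   (pcompose [:0, inverse (t ^ p):] (scaled_artin_schreier_poly p t)))"
    by (simp only: scaled_trace_poly_def pcompose_smult pcompose_assoc)
  also have "\<dots> = smult t (\<Sum>j<k. (?Y ^ p - ?Y) ^ (p ^ j))"
    by (simp only: inner pcompose_trace_poly)
  also have "\<dots> = smult t (?Y ^ (p ^ k) - ?Y)"
    using assms(1,2) by (subst sum_frobenius_telescope[where n = 1]) simp_all
  also have "\<dots> = monom 1 (p ^ k) - [:0, 1:]"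
    using assms(4) unfolding frob by (simp add: smult_diff_right smult_monom monom_Suc monom_0)
  finally show ?thesis .
qed

lemma poly_scaled_artin_schreier_trace:
  fixes t y :: "'a::field"
  assumes "CHAR('a) = p" and "prime p" and "t ^ (p ^ k) = t" and "t \<noteq> 0"
  shows "poly (scaled_artin_schreier_poly p t) (poly (scaled_trace_poly p k t) y) = y ^ (p ^ k) - y"
proof -
  define w where "w = y * inverse (t ^ p)"
  define a where "a = fin_trace p k w"
  have "p > 0"
    using assms(2) prime_gt_0_nat by blast
  then have "poly (scaled_artin_schreier_poly p t) (t * a) = t ^ p * (a ^ p - a)"
    by (cases p) (simp_all add: scaled_artin_schreier_poly_def poly_monom algebra_simps)
  also have "a ^ p - a = w ^ (p ^ k) - w"
    unfolding a_def using assms(1,2) by (intro fin_trace_power_minus_self[where n = 1]) simp_all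
  also have "t ^ p * (w ^ (p ^ k) - w) = y ^ (p ^ k) - y"
  proof -
    have "inverse (t ^ p) ^ (p ^ k) = inverse (t ^ p)"
      using assms(3) by (metis power_inverse power_mult mult.commute)
    then show ?thesis
      using assms(4) by (simp add: w_def right_diff_distrib field_simps)
  qed
  finally show ?thesis
    by (simp add: poly_scaled_trace_poly a_def w_def)
qed

lemma poly_scaled_trace_poly_add:
  fixes x y t :: "'a::field"
  assumes "prime CHAR('a)" and "p = CHAR('a)"
  shows "poly (scaled_trace_poly p k t) (x + y)
           = poly (scaled_trace_poly p k t) x + poly (scaled_trace_poly p k t) y"
  using fin_trace_add[OF assms(1), where n = 1] assms(2)
  by (simp add: poly_scaled_trace_poly distrib_left distrib_right)

lemma poly_scaled_trace_poly_power:
  fixes x t :: "'a::field"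
  assumes "prime CHAR('a)" and "p = CHAR('a)" and "m = p ^ j" and "t ^ m = t"
  shows "poly (scaled_trace_poly p k t) (x ^ m) = poly (scaled_trace_poly p k t) x ^ m"
proof -
  have "inverse (t ^ p) ^ m = inverse (t ^ p)"
    using assms(4) by (metis power_inverse power_mult mult.commute)
  moreover have "fin_trace p k ((x * inverse (t ^ p)) ^ m)
                   = fin_trace p k (x * inverse (t ^ p)) ^ m"
    using assms(2,3) by (intro fin_trace_power[OF assms(1), where n = j]) simp
  ultimately have "fin_trace p k (x * inverse (t ^ p)) ^ m
                     = fin_trace p k (x ^ m * inverse (t ^ p))"
    by (simp add: power_mult_distrib)
  then show ?thesis
    using assms(4) by (simp add: poly_scaled_trace_poly power_mult_distrib)
qed

lemma
  assumes "p \<ge> 2"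
  shows degree_scaled_artin_schreier_poly: "degree (scaled_artin_schreier_poly p t) = p"
    and lead_coeff_scaled_artin_schreier_poly: "lead_coeff (scaled_artin_schreier_poly p t) = 1"
proof -
  have coeff: "coeff (scaled_artin_schreier_poly p t) p = 1"
    and "degree (scaled_artin_schreier_poly p t) \<le> p"
    using assms by (auto intro!: degree_diff_le simp: scaled_artin_schreier_poly_def degree_monom_le
        coeff_pCons split: nat.split)
  then show degree: "degree (scaled_artin_schreier_poly p t) = p"
    by (simp add: le_antisym le_degree)
  show "lead_coeff (scaled_artin_schreier_poly p t) = 1"
    using coeff by (simp add: degree)
qed

lemma card_fin_trace_preimage_roots_le:
  fixes P :: "'a::{field,finite} poly"
  assumes "q = CHAR('a) ^ n" and "q \<ge> 2" and "r > 0" and "P \<noteq> 0"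
  shows "card {y. poly P (fin_trace q r y) = 0} \<le> degree P * q ^ (r - 1)"
proof -
  have "card {y. poly P (fin_trace q r y) = 0} = card {y. fin_trace q r y \<in> {x. poly P x = 0}}"
    by simp
  also have "\<dots> \<le> card {x. poly P x = 0} * card {y :: 'a. fin_trace q r y = 0}"
    by (rule card_preimage_additive_le[where f = "fin_trace q r",
          OF fin_trace_add[OF prime_CHAR_finite_field assms(1)]]) simp
  also have "\<dots> \<le> degree P * q ^ (r - 1)"
    using card_poly_roots_bound[OF assms(4)] card_fin_trace_zero_le[OF assms(2,3)]
    by (rule mult_le_mono)
  finally show ?thesis .
qed

context
  fixes p k q r :: nat
  assumes char: "CHAR('a::{field,finite}) = p"
    and q: "q = p ^ k" and k_pos: "k > 0" and r_pos: "r > 0"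
    and card_UNIV: "card (UNIV :: 'a set) = q ^ r"
begin

private lemma prime_p: "prime p"
proof -
  have "prime CHAR('a)"
    by (rule prime_CHAR_finite_field)
  then show ?thesis
    using char by simp
qed

private lemma p_ge_2: "p \<ge> 2"
  using prime_p prime_ge_2_nat by blast

private lemma q_ge_2: "q \<ge> 2"
  using one_less_power[OF prime_gt_1_nat[OF prime_p] k_pos] q by simp

private lemma q_CHAR: "q = CHAR('a) ^ k"
  using q char by simp

lemma fin_trace_power_eq_self: "fin_trace q r (x :: 'a) ^ q = fin_trace q r x"
  using fin_trace_power_minus_self[OF prime_CHAR_finite_field q_CHAR, of r x]
    field_power_card_eq_self[of x] card_UNIV
  by simp

lemma range_scaled_trace_poly_subset:
  fixes t :: 'a
  assumes "t ^ q = t" and "t \<noteq> 0"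
  shows "range (poly (scaled_trace_poly p k t))
           \<subseteq> {y. poly (scaled_artin_schreier_poly p t) (fin_trace q r y) = 0}"
proof safe
  let ?M = "poly (scaled_trace_poly p k t)"
  fix y
  have "?M (x + z) = ?M x + ?M z" for x z
    using prime_p char by (intro poly_scaled_trace_poly_add) simp_all
  moreover have "?M (x ^ q) = ?M x ^ q" for x
    using prime_p char q assms(1) by (intro poly_scaled_trace_poly_power) simp_all
  ultimately have "fin_trace q r (?M y) = ?M (fin_trace q r y)"
    by (rule fin_trace_commute)
  moreover have "poly (scaled_artin_schreier_poly p t) (?M x) = x ^ q - x" for x
    using char prime_p assms unfolding q by (rule poly_scaled_artin_schreier_trace)
  ultimately show "poly (scaled_artin_schreier_poly p t) (fin_trace q r (?M y)) = 0"
    by (simp add: fin_trace_power_eq_self)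
qed

lemma card_scaled_trace_fiber:
  fixes \<alpha> :: 'a
  assumes "fin_trace q r \<alpha> \<noteq> 0"
  shows "card {y. poly (scaled_trace_poly p k (fin_trace q r \<alpha>)) y = \<alpha>} = p ^ (k - 1)"
proof -
  define t where "t = fin_trace q r \<alpha>"
  define L where "L = scaled_artin_schreier_poly p t"
  define M where "M = scaled_trace_poly p k t"
  have "t ^ q = t" "t \<noteq> 0"
    using fin_trace_power_eq_self assms by (simp_all add: t_def)
  have "degree M = p ^ (k - 1)" "lead_coeff M = 1"
    using degree_scaled_trace_poly lead_coeff_scaled_trace_poly p_ge_2 k_pos \<open>t ^ q = t\<close> \<open>t \<noteq> 0\<close> q
    by (simp_all add: M_def)
  then have kernel: "card {y. poly M y = 0} \<le> p ^ (k - 1)"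
    using card_poly_roots_bound[of M] by fastforce
  have "L \<noteq> 0"
    using lead_coeff_scaled_artin_schreier_poly[OF p_ge_2, of t] by (auto simp: L_def)
  then have card_K: "card {y. poly L (fin_trace q r y) = 0} \<le> p * q ^ (r - 1)"
    using card_fin_trace_preimage_roots_le[OF q_CHAR q_ge_2 r_pos, of L]
    by (simp add: L_def degree_scaled_artin_schreier_poly[OF p_ge_2])
  have "poly L t = 0"
    using p_ge_2 by (cases p) (simp_all add: L_def scaled_artin_schreier_poly_def poly_monom)
  moreover have "card (UNIV :: 'a set) = (p * q ^ (r - 1)) * p ^ (k - 1)"
    using card_UNIV q k_pos r_pos by (cases k; cases r) (simp_all add: algebra_simps)
  moreover have "poly M (x + y) = poly M x + poly M y" for x y
    unfolding M_def using prime_p char by (intro poly_scaled_trace_poly_add) simp_all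
  moreover have "range (poly M) \<subseteq> {y. poly L (fin_trace q r y) = 0}"
    using range_scaled_trace_poly_subset[OF \<open>t ^ q = t\<close> \<open>t \<noteq> 0\<close>] by (simp add: M_def L_def)
  ultimately show ?thesis
    using card_fiber_additive_eq[where f = "poly M", OF _ _ _ card_K kernel]
    by (simp add: M_def t_def)
qed

lemma nonzero_trace_factorization:
  fixes \<alpha> :: 'a
  assumes "fin_trace q r \<alpha> \<noteq> 0"
  shows "\<exists>\<gamma>. inj_on \<gamma> {..<p ^ (k - 1)} \<and> (\<forall>i<p ^ (k - 1). \<gamma> i \<noteq> 0) \<and>
           monom 1 q - [:0, 1:] - [:\<alpha>:]
             = (\<Prod>i<p ^ (k - 1). scaled_artin_schreier_poly p (fin_trace q r \<alpha>) - [:\<gamma> i:])"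
proof -
  define t where "t = fin_trace q r \<alpha>"
  define L where "L = scaled_artin_schreier_poly p t"
  define M where "M = scaled_trace_poly p k t"
  define S where "S = {y. poly M y = \<alpha>}"
  have "t ^ q = t" "t \<noteq> 0"
    using fin_trace_power_eq_self assms by (simp_all add: t_def)
  have card_S: "card S = p ^ (k - 1)"
    using card_scaled_trace_fiber[OF assms] by (simp add: S_def M_def t_def)
  then have "finite S"
    using p_ge_2 card.infinite by fastforce
  then obtain \<gamma> where \<gamma>: "bij_betw \<gamma> {..<p ^ (k - 1)} S"
    using ex_bij_betw_nat_finite[of S] card_S by (auto simp: lessThan_atLeast0)
  have "poly M 0 = 0"
    using p_ge_2 by (simp add: M_def poly_scaled_trace_poly fin_trace_def power_0_left)
  moreover have "\<alpha> \<noteq> 0"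
    using assms q_ge_2 by (auto simp: fin_trace_def power_0_left)
  ultimately have "0 \<notin> S"
    by (simp add: S_def)
  have "degree M = p ^ (k - 1)" "lead_coeff M = 1"
    using degree_scaled_trace_poly lead_coeff_scaled_trace_poly p_ge_2 k_pos \<open>t ^ q = t\<close> \<open>t \<noteq> 0\<close> q
    by (simp_all add: M_def)
  have "monom 1 q - [:0, 1:] - [:\<alpha>:] = pcompose (M - [:\<alpha>:]) L"
    using pcompose_scaled_trace_artin_schreier[OF char prime_p, of t k] \<open>t ^ q = t\<close> \<open>t \<noteq> 0\<close> q
    by (simp add: pcompose_diff M_def L_def)
  also have "\<dots> = (\<Prod>c\<in>S. L - [:c:])"
    using \<open>degree M = p ^ (k - 1)\<close> \<open>lead_coeff M = 1\<close> p_ge_2 \<open>finite S\<close> card_S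
    by (intro pcompose_diff_const_eq_prod) (simp_all add: S_def)
  also have "\<dots> = (\<Prod>i<p ^ (k - 1). L - [:\<gamma> i:])"
    by (rule prod.reindex_bij_betw[OF \<gamma>, symmetric])
  finally show ?thesis
    using \<gamma> \<open>0 \<notin> S\<close> by (auto simp: bij_betw_def L_def t_def)
qed

lemma zero_trace_factorization:
  fixes \<alpha> :: 'a
  assumes "fin_trace q r \<alpha> = 0"
  shows "\<exists>cs. distinct cs \<and> length cs = q \<and>
           monom 1 q - [:0, 1:] - [:\<alpha>:] = (\<Prod>c\<leftarrow>cs. [:- c, 1:])"
proof -
  let ?P = "scaled_artin_schreier_poly q (1 :: 'a)"
  have P: "?P = monom 1 q - [:0, 1:]" "poly ?P x = x ^ q - x" for x
    by (simp_all add: scaled_artin_schreier_poly_def poly_monom)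
  have add: "poly ?P (x + y) = poly ?P x + poly ?P y" for x y
    unfolding P(2) by (simp add: freshmans_dream'[OF prime_CHAR_finite_field q_CHAR])
  have "fin_trace q r (x ^ q - x) = 0" for x :: 'a
    using fin_trace_frobenius_diff[OF prime_CHAR_finite_field q_CHAR, of r x]
      field_power_card_eq_self[of x] card_UNIV
    by simp
  then have range: "range (poly ?P) \<subseteq> {x. fin_trace q r x = 0}"
    by (auto simp: P(2))
  have "degree ?P = q"
    using q_ge_2 by (rule degree_scaled_artin_schreier_poly)
  moreover have "lead_coeff ?P = 1"
    using q_ge_2 by (rule lead_coeff_scaled_artin_schreier_poly)
  ultimately have kernel: "card {x. poly ?P x = 0} \<le> q"
    using card_poly_roots_bound[of ?P] by fastforce
  have "card (UNIV :: 'a set) = q ^ (r - 1) * q"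
    using card_UNIV r_pos by (simp flip: power_Suc2)
  then have card_S: "card {x. poly ?P x = \<alpha>} = q"
    using card_fiber_additive_eq[where f = "poly ?P",
        OF add range _ card_fin_trace_zero_le[OF q_ge_2 r_pos] kernel] assms
    by simp
  then have "finite {x. poly ?P x = \<alpha>}"
    using q_ge_2 card.infinite by fastforce
  then obtain cs where cs: "set cs = {x. poly ?P x = \<alpha>}" "distinct cs"
    using finite_distinct_list by blast
  have "pcompose (?P - [:\<alpha>:]) [:0, 1:] = (\<Prod>c\<in>set cs. [:0, 1:] - [:c:])"
    unfolding cs(1) using q_ge_2 \<open>degree ?P = q\<close> \<open>lead_coeff ?P = 1\<close> card_S
      \<open>finite {x. poly ?P x = \<alpha>}\<close>
    by (intro pcompose_diff_const_eq_prod[where n = q]) simp_all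
  also have "\<dots> = (\<Prod>c\<leftarrow>cs. [:- c, 1:])"
    by (simp add: prod.distinct_set_conv_list[OF cs(2)])
  finally have "monom 1 q - [:0, 1:] - [:\<alpha>:] = (\<Prod>c\<leftarrow>cs. [:- c, 1:])"
    by (simp only: pcompose_idR P(1))
  moreover have "length cs = q"
    using card_S cs by (metis distinct_card)
  ultimately show ?thesis
    using cs(2) by blast
qed

end

theorem theorem2p2:
  fixes p q r k :: nat and \<alpha> :: "'a::{field,finite}"
  assumes "prime p" and "q = p ^ k" and "q \<ge> 3" and "r \<ge> 1"
    and "card (UNIV :: 'a set) = q ^ r"
  shows "(fin_trace q r \<alpha> \<noteq> 0 \<longrightarrow>
           (let \<beta> = (fin_trace q r \<alpha>) ^ (p - 1) in
             \<exists>\<gamma> :: nat \<Rightarrow> 'a. inj_on \<gamma> {..<q div p} \<and> (\<forall>i<q div p. \<gamma> i \<noteq> 0) \<and>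
               monom 1 q - [:0, 1:] - [:\<alpha>:] =
                 (\<Prod>i<q div p. monom 1 p - smult \<beta> [:0, 1:] - [:\<gamma> i:])))
       \<and> (fin_trace q r \<alpha> = 0 \<longrightarrow>
           (\<exists>cs :: 'a list. monom 1 q - [:0, 1:] - [:\<alpha>:] = (\<Prod>c\<leftarrow>cs. [:- c, 1:])))"
proof -
  have "k > 0" "r > 0"
    using assms(2-4) by (auto intro: gr0I)
  then have char: "CHAR('a) = p"
    using CHAR_eq_if_card_eq_prime_power[OF assms(1), of "k * r"] assms(2,5)
    by (simp add: power_mult)
  have "q div p = p ^ (k - 1)"
    using assms(1,2) \<open>k > 0\<close> by (cases k) (simp_all add: prime_gt_0_nat)
  then show ?thesis
    using nonzero_trace_factorization[OF char assms(2) \<open>k > 0\<close> \<open>r > 0\<close> assms(5), of \<alpha>]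
      zero_trace_factorization[OF char assms(2) \<open>k > 0\<close> \<open>r > 0\<close> assms(5), of \<alpha>]
    unfolding Let_def scaled_artin_schreier_poly_def by simp blast
qed

end
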